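(* Let $s\ge 1$ and $d\ge 1$ be integers. A partition $\lambda$ is an $(s,s+1)$-core partition with $d$-distinct parts if and only if $\beta(\lambda)$ is a $d$-th order twin-free subset of $\{1,2,\ldots,s-1\}$.
   Context: A partition $\lambda=(\lambda_1,\ldots,\lambda_l)$ is a finite nonincreasing sequence of positive integers (the empty partition is allowed). $\lambda$ is a partition with $d$-distinct parts if $\lambda_i-\lambda_{i+1}\ge d$ for all $1\le i\le l-1$. In the Young diagram of $\lambda$, the hook length $h(i,j)$ of box $(i,j)$ is the number of boxes directly to its right, plus the number directly below it, plus one. $\lambda$ is an $(s_1,\ldots,s_t)$-core partition if no box has hook length equal to any of $s_1,\ldots,s_t$. The set $\beta(\lambda)=\{h(i,1):1\le i\le l\}$ is the set of first-column hook lengths. A set $X\subseteq\mathbb{N}$ is a $d$-th order twin-free set if there is no $x\in X$ and $k$ with $1\le k\le d$ such that $\{x,x+k\}\subseteq X$. *)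

theory Defs
  imports Main
begin

text \<open>A partition is a finite nonincreasing list of positive integers (rows of the
Young diagram, 0-indexed). The empty list is the empty partition.\<close>
definition is_partition :: "nat list \<Rightarrow> bool" where
  "is_partition la \<longleftrightarrow> sorted_wrt (\<ge>) la \<and> (\<forall>x \<in> set la. 0 < x)"

definition d_distinct :: "nat \<Rightarrow> nat list \<Rightarrow> bool" where
  "d_distinct d la \<longleftrightarrow> (\<forall>i. Suc i < length la \<longrightarrow> la ! (Suc i) + d \<le> la ! i)"

definition boxes :: "nat list \<Rightarrow> (nat \<times> nat) set" where
  "boxes la = {(i, j). i < length la \<and> j < la ! i}"

definition col_len :: "nat list \<Rightarrow> nat \<Rightarrow> nat" where
  "col_len la j = card {k. k < length la \<and> j < la ! k}"

definition hook :: "nat list \<Rightarrow> nat \<Rightarrow> nat \<Rightarrow> nat" where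
  "hook la i j = (la ! i - Suc j) + (col_len la j - Suc i) + 1"

definition is_core :: "nat set \<Rightarrow> nat list \<Rightarrow> bool" where
  "is_core S la \<longleftrightarrow> (\<forall>(i, j) \<in> boxes la. hook la i j \<notin> S)"

definition beta :: "nat list \<Rightarrow> nat set" where
  "beta la = {hook la i 0 | i. i < length la}"

definition twin_free :: "nat \<Rightarrow> nat set \<Rightarrow> bool" where
  "twin_free d X \<longleftrightarrow> \<not> (\<exists>x \<in> X. \<exists>k. 1 \<le> k \<and> k \<le> d \<and> x + k \<in> X)"

end

theory Submission
  imports Defs
begin

text \<open>The first-column hook lengths are \<lambda>_i + l - i, so consecutive ones differ by
  \<lambda>_i - \<lambda>_(i+1) + 1: d-distinctness says exactly that these gaps exceed d, i.e. that
  \<beta>(\<lambda>) is d-th order twin-free. The largest hook length is that of the corner box, the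
  maximum of \<beta>(\<lambda>). For distinct parts, the hook lengths along the first row decrease by at
  most 2 per step and end at 1, so they cannot jump over both s and s + 1; hence \<lambda> is an
  (s, s + 1)-core iff its corner hook is below s, i.e. iff \<beta>(\<lambda>) \<subseteq> {1, ..., s - 1}.\<close>

lemma partition_nth_antimono:
  assumes "is_partition la" "i \<le> j" "j < length la"
  shows "la ! j \<le> la ! i"
  using assms unfolding is_partition_def sorted_wrt_iff_nth_less
  by (cases "i = j") auto

lemma partition_nth_pos:
  assumes "is_partition la" "i < length la"
  shows "0 < la ! i"
  using assms unfolding is_partition_def by auto

lemma col_len_le_length: "col_len la j \<le> length la"
proof -
  have "{k. k < length la \<and> j < la ! k} \<subseteq> {..<length la}" by auto
  then show ?thesis unfolding col_len_def by (metis card_lessThan card_mono finite_lessThan)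
qed

lemma col_len_0:
  assumes "is_partition la"
  shows "col_len la 0 = length la"
proof -
  have "{k. k < length la \<and> 0 < la ! k} = {..<length la}"
    using partition_nth_pos[OF assms] by auto
  then show ?thesis unfolding col_len_def by simp
qed

lemma hook_first_column:
  assumes "is_partition la" "i < length la"
  shows "hook la i 0 = la ! i + (length la - Suc i)"
  using partition_nth_pos[OF assms] col_len_0[OF assms(1)] unfolding hook_def by simp

lemma hook_le_corner:
  assumes "is_partition la" "(i, j) \<in> boxes la"
  shows "hook la i j \<le> hook la 0 0"
proof -
  have i: "i < length la" "j < la ! i" using assms(2) unfolding boxes_def by auto
  have "la ! i \<le> la ! 0" using partition_nth_antimono[OF assms(1), of 0 i] i by simp
  moreover have "hook la 0 0 = la ! 0 + (length la - 1)"
    using hook_first_column[OF assms(1), of 0] i by (cases la) auto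
  ultimately show ?thesis using i col_len_le_length[of la j] unfolding hook_def by linarith
qed

lemma d_distinct_nth_diff:
  assumes "d_distinct d la" "i \<le> j" "j < length la"
  shows "la ! j + d * (j - i) \<le> la ! i"
  using assms(2,3)
proof (induction j)
  case 0
  then show ?case by simp
next
  case (Suc j)
  show ?case
  proof (cases "i = Suc j")
    case False
    then have "i \<le> j" using Suc by simp
    with Suc have "la ! j + d * (j - i) \<le> la ! i" by simp
    moreover have "la ! Suc j + d \<le> la ! j" using assms(1) Suc(3) unfolding d_distinct_def by blast
    moreover have "d * (Suc j - i) = d + d * (j - i)" using \<open>i \<le> j\<close> by (simp add: Suc_diff_le)
    ultimately show ?thesis by simp
  qed simp
qed

lemma d_distinct_nth_inj:
  assumes "d_distinct d la" "1 \<le> d" "i < length la" "j < length la" "la ! i = la ! j"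
  shows "i = j"
proof (rule ccontr)
  assume "i \<noteq> j"
  then consider "i < j" | "j < i" by linarith
  then show False
    using d_distinct_nth_diff[OF assms(1), of i j] d_distinct_nth_diff[OF assms(1), of j i] assms
    by cases (simp_all add: Suc_le_eq)
qed

lemma card_rows_of_length_le_1:
  assumes "d_distinct d la" "1 \<le> d"
  shows "card {k. k < length la \<and> la ! k = m} \<le> 1"
  using d_distinct_nth_inj[OF assms] by (subst One_nat_def, subst card_le_Suc0_iff_eq) auto

lemma col_len_le_col_len_Suc:
  assumes "d_distinct d la" "1 \<le> d"
  shows "col_len la j \<le> col_len la (Suc j) + 1"
proof -
  let ?longer = "{k. k < length la \<and> Suc j < la ! k}"
  let ?equal = "{k. k < length la \<and> la ! k = Suc j}"
  have "col_len la j \<le> card (?longer \<union> ?equal)"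
    unfolding col_len_def by (intro card_mono) auto
  also have "\<dots> \<le> card ?longer + card ?equal" by (rule card_Un_le)
  finally show ?thesis
    using card_rows_of_length_le_1[OF assms, of "Suc j"] unfolding col_len_def by simp
qed

lemma hook_first_row_Suc:
  assumes "d_distinct d la" "1 \<le> d" "Suc j < la ! 0" "la \<noteq> []"
  shows "hook la 0 j \<le> hook la 0 (Suc j) + 2"
proof -
  have "{0} \<subseteq> {k. k < length la \<and> Suc j < la ! k}" using assms(3,4) by simp
  then have "1 \<le> col_len la (Suc j)"
    unfolding col_len_def using card_mono[of "{k. k < length la \<and> Suc j < la ! k}" "{0}"] by simp
  then show ?thesis
    using col_len_le_col_len_Suc[OF assms(1,2), of j] assms(3) unfolding hook_def by simp
qed

lemma hook_first_row_last:
  assumes "is_partition la" "d_distinct d la" "1 \<le> d" "la \<noteq> []"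
  shows "hook la 0 (la ! 0 - 1) = 1"
proof -
  let ?top = "{k. k < length la \<and> la ! k = la ! 0}"
  have pos: "0 < la ! 0" using partition_nth_pos[OF assms(1)] assms(4) by simp
  have "{k. k < length la \<and> la ! 0 - 1 < la ! k} = ?top"
    using partition_nth_antimono[OF assms(1), of 0] pos by fastforce
  moreover have "1 \<le> card ?top"
    using assms(4) card_mono[of ?top "{0}"] by simp
  ultimately have "col_len la (la ! 0 - 1) = 1"
    using card_rows_of_length_le_1[OF assms(2,3), of "la ! 0"] unfolding col_len_def by simp
  then show ?thesis unfolding hook_def using pos by simp
qed

lemma descent_by_two_hits_pair:
  fixes f :: "nat \<Rightarrow> nat"
  assumes "s \<le> f 0" "f n \<le> s + 1" "\<And>j. j < n \<Longrightarrow> f j \<le> f (Suc j) + 2"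
  shows "\<exists>j \<le> n. f j = s \<or> f j = s + 1"
  using assms(2,3)
proof (induction n)
  case 0
  then show ?case using assms(1) by auto
next
  case (Suc n)
  show ?case
  proof (cases "f n \<le> s + 1")
    case True
    then obtain j where "j \<le> n" "f j = s \<or> f j = s + 1" using Suc by auto
    then show ?thesis using le_SucI by blast
  next
    case False
    then have "f (Suc n) = s \<or> f (Suc n) = s + 1" using Suc.prems by fastforce
    then show ?thesis by blast
  qed
qed

lemma corner_hook_less_if_core:
  assumes "is_partition la" "d_distinct d la" "1 \<le> d" "la \<noteq> []" "is_core {s, s + 1} la"
  shows "hook la 0 0 < s"
proof (rule ccontr)
  assume "\<not> hook la 0 0 < s"
  moreover have "hook la 0 (la ! 0 - 1) \<le> s + 1"
    using hook_first_row_last[OF assms(1-4)] by simp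
  moreover have "hook la 0 j \<le> hook la 0 (Suc j) + 2" if "j < la ! 0 - 1" for j
    using hook_first_row_Suc[OF assms(2,3) _ assms(4)] that by simp
  ultimately obtain j where "j \<le> la ! 0 - 1" "hook la 0 j \<in> {s, s + 1}"
    using descent_by_two_hits_pair[of s "hook la 0" "la ! 0 - 1"] by auto
  moreover have "0 < la ! 0" using partition_nth_pos[OF assms(1)] assms(4) by simp
  ultimately show False using assms(4,5) unfolding is_core_def boxes_def by fastforce
qed

lemma core_iff_corner_hook_less:
  assumes "is_partition la" "d_distinct d la" "1 \<le> d"
  shows "is_core {s, s + 1} la \<longleftrightarrow> (la \<noteq> [] \<longrightarrow> hook la 0 0 < s)"
  using corner_hook_less_if_core[OF assms] hook_le_corner[OF assms(1)]
  unfolding is_core_def boxes_def by fastforce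

lemma beta_subset_iff_corner_hook_less:
  assumes "is_partition la"
  shows "beta la \<subseteq> {1..s - 1} \<longleftrightarrow> (la \<noteq> [] \<longrightarrow> hook la 0 0 < s)"
proof -
  have "hook la i 0 \<le> hook la 0 0" if "i < length la" for i
    using hook_le_corner[OF assms, of i 0] partition_nth_pos[OF assms that] that
    unfolding boxes_def by simp
  moreover have "1 \<le> hook la i 0" for i unfolding hook_def by simp
  ultimately show ?thesis unfolding beta_def by fastforce
qed

lemma hook_first_column_gap:
  assumes "is_partition la" "d_distinct d la" "i < j" "j < length la"
  shows "hook la j 0 + d + 1 \<le> hook la i 0"
proof -
  have "d * 1 \<le> d * (j - i)" using assms(3) by (intro mult_le_mono2) simp
  moreover have "la ! j + d * (j - i) \<le> la ! i" using d_distinct_nth_diff[OF assms(2)] assms by simp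
  moreover have "hook la i 0 = la ! i + (length la - Suc i)" "hook la j 0 = la ! j + (length la - Suc j)"
    using hook_first_column[OF assms(1)] assms(3,4) by simp_all
  ultimately show ?thesis using assms(3,4) by linarith
qed

lemma twin_free_beta_iff_d_distinct:
  assumes "is_partition la"
  shows "twin_free d (beta la) \<longleftrightarrow> d_distinct d la"
proof
  assume twin_free: "twin_free d (beta la)"
  show "d_distinct d la"
    unfolding d_distinct_def
  proof (intro allI impI, rule ccontr)
    fix i assume i: "Suc i < length la" and close: "\<not> la ! Suc i + d \<le> la ! i"
    define k where "k = la ! i - la ! Suc i + 1"
    have "la ! Suc i \<le> la ! i" using partition_nth_antimono[OF assms, of i "Suc i"] i by simp
    then have "hook la i 0 = hook la (Suc i) 0 + k" "1 \<le> k" "k \<le> d"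
      using hook_first_column[OF assms, of i] hook_first_column[OF assms, of "Suc i"] i close
      unfolding k_def by simp_all
    moreover have "hook la i 0 \<in> beta la" "hook la (Suc i) 0 \<in> beta la"
      using i unfolding beta_def by auto
    ultimately show False using twin_free unfolding twin_free_def by metis
  qed
next
  assume "d_distinct d la"
  then have "hook la j 0 \<noteq> hook la i 0 + k"
    if "1 \<le> k" "k \<le> d" "i < length la" "j < length la" for i j k
    using hook_first_column_gap[OF assms, of d i j] hook_first_column_gap[OF assms, of d j i] that
    by (cases i j rule: linorder_cases) auto
  then show "twin_free d (beta la)" unfolding twin_free_def beta_def by fastforce
qed

theorem mainTheorem3:
  fixes s d :: nat and la :: "nat list"
  assumes "1 \<le> s" and "1 \<le> d" and "is_partition la"
  shows "(is_core {s, s + 1} la \<and> d_distinct d la) \<longleftrightarrow>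
         (beta la \<subseteq> {1..s - 1} \<and> twin_free d (beta la))"
proof (cases "d_distinct d la")
  case True
  then show ?thesis
    using core_iff_corner_hook_less[OF assms(3) True assms(2)]
      beta_subset_iff_corner_hook_less[OF assms(3)] twin_free_beta_iff_d_distinct[OF assms(3)]
    by simp
next
  case False
  then show ?thesis using twin_free_beta_iff_d_distinct[OF assms(3)] by simp
qed

end
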